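(* Let $N\ge2$, and for $\bar x,\alpha\in\mathbb{R}$, $t\ge0$ define $$\Psi_L(\bar x,\alpha,t):=\alpha+\exp\!\left(-\tfrac{N-1}{N}t\right)(\bar x-\alpha).$$ Let $x(t)=(x_1(t),\dots,x_N(t))$, $x_i(t)\in\mathbb{R}$, be a (Carathéodory) solution of $$\dot x_i(t)=\frac1N\sum_{j=1}^N M_{ij}(t)(x_j-x_i),\qquad i=1,\dots,N,$$ with Lebesgue measurable $M_{ij}:[0,+\infty)\to[0,1]$, such that $x_i(0)\ge\alpha$ for all $i$, and let $\bar x\ge\alpha$. Let $T>0$. If there exist an index $I$ and a time $\tau\in[0,T]$ with $x_I(\tau)\ge\Psi_L(\bar x,\alpha,\tau)$, then $x_I(t)\ge\Psi_L(\bar x,\alpha,t)$ for all $t\ge\tau$. *)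

theory Defs
  imports "HOL-Analysis.Analysis"
begin

definition Psi_L :: "nat \<Rightarrow> real \<Rightarrow> real \<Rightarrow> real \<Rightarrow> real" where
  "Psi_L N xbar \<alpha> t = \<alpha> + exp (- ((real N - 1) / real N) * t) * (xbar - \<alpha>)"

text \<open>Right-hand side of the i-th equation (agents indexed 0..N-1).\<close>
definition rhs :: "nat \<Rightarrow> (nat \<Rightarrow> nat \<Rightarrow> real \<Rightarrow> real) \<Rightarrow> (nat \<Rightarrow> real \<Rightarrow> real) \<Rightarrow> nat \<Rightarrow> real \<Rightarrow> real" where
  "rhs N M x i s = (1 / real N) * (\<Sum>j<N. M i j s * (x j s - x i s))"

text \<open>Caratheodory solution on [0,+infinity): each component is absolutely continuous with
  derivative equal to the right-hand side almost everywhere, i.e. the right-hand side is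
  Lebesgue integrable on every [0,t] and x_i(t) = x_i(0) + integral of the rhs over [0,t].\<close>
definition caratheodory_solution ::
  "nat \<Rightarrow> (nat \<Rightarrow> nat \<Rightarrow> real \<Rightarrow> real) \<Rightarrow> (nat \<Rightarrow> real \<Rightarrow> real) \<Rightarrow> bool" where
  "caratheodory_solution N M x \<longleftrightarrow>
     (\<forall>i<N. \<forall>t\<ge>0. rhs N M x i absolutely_integrable_on {0..t} \<and>
        (rhs N M x i has_integral (x i t - x i 0)) {0..t})"

end

theory Submission
  imports Defs
begin

text \<open>Write c = (N - 1) / N. Because 0 \<le> M i j \<le> 1 and the diagonal term of the sum vanishes,
  the right-hand side of the i-th equation is at least -c (x_i - \<beta>) at every time at which all
  components are \<ge> \<beta>. Taking \<beta> = \<alpha>, the constant \<alpha> is a lower barrier for the whole system;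
  knowing this, x_I satisfies x_I' \<ge> -c (x_I - \<alpha>), whose equality case is solved by \<Psi>_L, so
  x_I cannot cross \<Psi>_L from above. Both comparisons are instances of one barrier principle,
  proved from the integrated form of the equation alone: perturb the barrier by \<epsilon> (1 + t - a)
  and show that no component can ever touch it for the first time.\<close>

lemma has_integral_increment_subinterval:
  fixes f y :: "real \<Rightarrow> real"
  assumes increment: "\<And>t. a \<le> t \<Longrightarrow> (f has_integral (y t - y a)) {a..t}"
    and "a \<le> u" "u \<le> t"
  shows "(f has_integral (y t - y u)) {u..t}"
proof -
  have whole: "(f has_integral (y t - y a)) {a..t}"
    using assms(2,3) by (intro increment) linarith
  then have "f integrable_on {a..t}"
    by (rule has_integral_integrable)
  then have "f integrable_on {u..t}"
    by (rule integrable_subinterval_real) (use \<open>a \<le> u\<close> in auto)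
  then have part: "(f has_integral integral {u..t} f) {u..t}" by blast
  have "(f has_integral (y u - y a + integral {u..t} f)) {a..t}"
    using assms(2,3) increment[OF \<open>a \<le> u\<close>] part by (rule has_integral_combine)
  then have "y u - y a + integral {u..t} f = y t - y a"
    using whole by (rule has_integral_unique)
  then have "integral {u..t} f = y t - y u"
    by simp
  with part show ?thesis by simp
qed

lemma continuous_on_if_has_integral_increments:
  fixes f y :: "real \<Rightarrow> real"
  assumes increment: "\<And>t. a \<le> t \<Longrightarrow> (f has_integral (y t - y a)) {a..t}"
  shows "continuous_on {a..b} y"
proof (cases "a \<le> b")
  case True
  have "f integrable_on {a..b}"
    using increment[OF True] by (rule has_integral_integrable)
  then have "continuous_on {a..b} (\<lambda>s. y a + integral {a..s} f)"
    by (intro continuous_intros indefinite_integral_continuous_1)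
  moreover have "y a + integral {a..s} f = y s" if "s \<in> {a..b}" for s
    using increment[of s] that by (simp add: integral_unique)
  ultimately show ?thesis by (rule continuous_on_eq)
qed simp

lemma finite_family_stays_positive:
  fixes w :: "'i \<Rightarrow> real \<Rightarrow> real"
  assumes "finite J"
    and cont: "\<And>j b. j \<in> J \<Longrightarrow> continuous_on {a..b} (w j)"
    and start: "\<And>j. j \<in> J \<Longrightarrow> 0 < w j a"
    and no_touch: "\<And>i t. a < t \<Longrightarrow> i \<in> J \<Longrightarrow>
                     (\<And>j s. j \<in> J \<Longrightarrow> s \<in> {a..t} \<Longrightarrow> 0 \<le> w j s) \<Longrightarrow> w i t \<noteq> 0"
    and "j \<in> J" "a \<le> t"
  shows "0 < w j t"
proof (rule ccontr)
  assume "\<not> 0 < w j t"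
  define S where "S = (\<Union>k\<in>J. {a..t} \<inter> w k -` {..0})"
  have "closed S"
    unfolding S_def using \<open>finite J\<close> by (intro closed_UN) (auto intro!: continuous_closed_preimage cont)
  moreover have "t \<in> S"
    using \<open>\<not> 0 < w j t\<close> assms(5,6) unfolding S_def by (auto simp: not_less)
  moreover have "bdd_below S"
    unfolding S_def by (rule bdd_belowI[of _ a]) auto
  ultimately have "Inf S \<in> S" and first: "\<And>s. s \<in> S \<Longrightarrow> Inf S \<le> s"
    by (auto intro: closed_contains_Inf cInf_lower)
  define t0 where "t0 = Inf S"
  obtain i where i: "i \<in> J" "w i t0 \<le> 0" and t0: "a \<le> t0" "t0 \<le> t"
    using \<open>Inf S \<in> S\<close> unfolding S_def t0_def by auto
  have nonneg: "0 \<le> w k s" if "k \<in> J" "s \<in> {a..t0}" for k s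
  proof (rule ccontr)
    assume "\<not> 0 \<le> w k s"
    moreover have "0 \<le> w k a" "a \<le> s"
      using start[OF \<open>k \<in> J\<close>] that by auto
    ultimately obtain r where r: "a \<le> r" "r \<le> s" "w k r = 0"
      using IVT2'[of "w k" s 0 a] cont[OF \<open>k \<in> J\<close>] by fastforce
    have "r \<noteq> s"
      using r(3) \<open>\<not> 0 \<le> w k s\<close> by auto
    then have "r < t0"
      using r(2) that(2) by simp
    moreover have "r \<in> S"
      using r that(1) t0 \<open>r < t0\<close> unfolding S_def by force
    ultimately show False
      using first unfolding t0_def by fastforce
  qed
  have "w i t0 = 0"
    using i nonneg[of i t0] t0 by simp
  moreover have "a \<noteq> t0"
    using start[OF i(1)] \<open>w i t0 = 0\<close> by auto
  ultimately show False
    using no_touch[of t0 i] i(1) nonneg t0 by simp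
qed

lemma continuous_on_below_near_right_end:
  fixes g :: "real \<Rightarrow> real"
  assumes "continuous_on {a..b} g" "a < b" "0 < \<eta>"
  obtains u where "a \<le> u" "u < b" "\<And>s. s \<in> {u..b} \<Longrightarrow> g s < g b + \<eta>"
proof -
  have "b \<in> {a..b}"
    using \<open>a < b\<close> by simp
  with assms obtain d where "0 < d"
    and near: "\<And>s. s \<in> {a..b} \<Longrightarrow> dist s b < d \<Longrightarrow> dist (g s) (g b) < \<eta>"
    unfolding continuous_on_iff by blast
  show ?thesis
  proof (rule that)
    show "a \<le> max a (b - d / 2)" "max a (b - d / 2) < b"
      using \<open>0 < d\<close> \<open>a < b\<close> by auto
    show "g s < g b + \<eta>" if "s \<in> {max a (b - d / 2)..b}" for s
      using near[of s] that \<open>0 < d\<close> by (auto simp: dist_real_def)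
  qed
qed

lemma perturbed_gap_positive:
  fixes y f \<phi> \<phi>' :: "real \<Rightarrow> real" and a t0 L \<epsilon> :: real
  defines "g \<equiv> \<lambda>s. y s - \<phi> s + \<epsilon> * (1 + s - a)"
  assumes "a < t0" "0 \<le> L" "0 < \<epsilon>"
    and cont: "continuous_on {a..t0} y"
    and increment: "\<And>u. u \<in> {a..t0} \<Longrightarrow> (f has_integral (y t0 - y u)) {u..t0}"
    and deriv: "\<And>s. s \<in> {a..t0} \<Longrightarrow> (\<phi> has_real_derivative \<phi>' s) (at s within {a..t0})"
    and lower: "\<And>s. s \<in> {a..t0} \<Longrightarrow> \<phi>' s - L * g s \<le> f s"
    and nonneg: "\<And>s. s \<in> {a..t0} \<Longrightarrow> 0 \<le> g s"
  shows "0 < g t0"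
proof (rule ccontr)
  assume "\<not> 0 < g t0"
  then have "g t0 = 0"
    using nonneg[of t0] \<open>a < t0\<close> by simp
  \<comment> \<open>Near t0 the gap is below \<eta>, so the loss L \<eta> permitted by the lower bound on f is beaten
      by the slope \<epsilon> of the perturbation, forcing g to increase on [u, t0].\<close>
  define \<eta> where "\<eta> = \<epsilon> / (L + 1)"
  have "0 < \<eta>" "L * \<eta> < \<epsilon>"
    using \<open>0 \<le> L\<close> \<open>0 < \<epsilon>\<close> by (auto simp: \<eta>_def field_simps)
  have cont_g: "continuous_on {a..t0} g"
    unfolding g_def using DERIV_continuous_on[OF deriv] cont by (intro continuous_intros)
  obtain u where u: "a \<le> u" "u < t0" and near: "\<And>s. s \<in> {u..t0} \<Longrightarrow> g s < g t0 + \<eta>"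
    using continuous_on_below_near_right_end[OF cont_g \<open>a < t0\<close> \<open>0 < \<eta>\<close>] by blast
  have bound: "\<phi>' s - L * \<eta> \<le> f s" if "s \<in> {u..t0}" for s
  proof -
    have "L * g s \<le> L * \<eta>"
      using near[OF that] \<open>g t0 = 0\<close> \<open>0 \<le> L\<close> by (simp add: mult_left_mono)
    with lower[of s] that u show ?thesis by auto
  qed
  have barrier_integral: "((\<lambda>s. \<phi>' s - L * \<eta>) has_integral (\<phi> t0 - \<phi> u - L * \<eta> * (t0 - u))) {u..t0}"
  proof -
    have "((\<lambda>s. \<phi> s - L * \<eta> * s) has_vector_derivative \<phi>' s - L * \<eta>) (at s within {u..t0})"
      if "s \<in> {u..t0}" for s
      using deriv[of s] that u unfolding has_real_derivative_iff_has_vector_derivative[symmetric]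
      by (auto intro!: derivative_eq_intros intro: DERIV_subset)
    then have "((\<lambda>s. \<phi>' s - L * \<eta>) has_integral (\<phi> t0 - L * \<eta> * t0 - (\<phi> u - L * \<eta> * u))) {u..t0}"
      using u by (intro fundamental_theorem_of_calculus) auto
    then show ?thesis
      by (simp add: algebra_simps)
  qed
  have "u \<in> {a..t0}"
    using u by simp
  then have "\<phi> t0 - \<phi> u - L * \<eta> * (t0 - u) \<le> y t0 - y u"
    using barrier_integral increment bound by (blast intro: has_integral_le)
  then have "(\<epsilon> - L * \<eta>) * (t0 - u) \<le> g t0 - g u"
    by (simp add: g_def algebra_simps)
  moreover have "0 < (\<epsilon> - L * \<eta>) * (t0 - u)"
    using \<open>L * \<eta> < \<epsilon>\<close> u by simp
  moreover have "0 \<le> g u"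
    using nonneg u by simp
  ultimately show False
    using \<open>g t0 = 0\<close> by linarith
qed

lemma lower_barrier_comparison:
  fixes y f \<phi> \<phi>' :: "'i \<Rightarrow> real \<Rightarrow> real" and a L :: real
  assumes "finite J" "0 \<le> L"
    and increment: "\<And>j u t. j \<in> J \<Longrightarrow> a \<le> u \<Longrightarrow> u \<le> t \<Longrightarrow> (f j has_integral (y j t - y j u)) {u..t}"
    and deriv: "\<And>j s. j \<in> J \<Longrightarrow> a \<le> s \<Longrightarrow> (\<phi> j has_real_derivative \<phi>' j s) (at s within {a..})"
    and init: "\<And>j. j \<in> J \<Longrightarrow> \<phi> j a \<le> y j a"
    \<comment> \<open>\<delta> is the slack by which the components may lie below their barriers; it lets the
        bound be applied to the perturbed barriers used in the proof.\<close>
    and dissipative: "\<And>i s \<delta>. i \<in> J \<Longrightarrow> a \<le> s \<Longrightarrow> 0 \<le> \<delta> \<Longrightarrow> (\<And>k. k \<in> J \<Longrightarrow> \<phi> k s - \<delta> \<le> y k s) \<Longrightarrow>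
                   \<phi>' i s - L * (y i s - \<phi> i s + \<delta>) \<le> f i s"
    and "j \<in> J" "a \<le> t"
  shows "\<phi> j t \<le> y j t"
proof -
  have cont_y: "continuous_on {a..b} (y k)" if "k \<in> J" for k b
    using increment[OF that order_refl] by (rule continuous_on_if_has_integral_increments)
  have deriv_within: "(\<phi> k has_real_derivative \<phi>' k s) (at s within {a..b})"
    if "k \<in> J" "s \<in> {a..b}" for k s b
    using deriv[of k s] that by (auto intro: DERIV_subset)
  have perturbed: "\<phi> j t < y j t + \<epsilon> * (1 + t - a)" if "0 < \<epsilon>" for \<epsilon>
  proof -
    define w where "w k s = y k s - \<phi> k s + \<epsilon> * (1 + s - a)" for k s
    have "0 < w j t"
    proof (rule finite_family_stays_positive[of J a w])
      show "continuous_on {a..b} (w k)" if "k \<in> J" for k b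
        unfolding w_def using cont_y[OF that] DERIV_continuous_on[OF deriv_within[OF that]]
        by (intro continuous_intros)
      show "0 < w k a" if "k \<in> J" for k
        using init[OF that] \<open>0 < \<epsilon>\<close> by (simp add: w_def)
      show "w i t0 \<noteq> 0"
        if "a < t0" "i \<in> J" and nonneg: "\<And>k s. k \<in> J \<Longrightarrow> s \<in> {a..t0} \<Longrightarrow> 0 \<le> w k s" for i t0
      proof -
        have "0 < y i t0 - \<phi> i t0 + \<epsilon> * (1 + t0 - a)"
        proof (rule perturbed_gap_positive[where f = "f i" and \<phi>' = "\<phi>' i" and L = L])
          fix s
          assume s: "s \<in> {a..t0}"
          have "0 \<le> \<epsilon> * (1 + s - a)"
            using \<open>0 < \<epsilon>\<close> s by simp
          moreover have "\<phi> k s - \<epsilon> * (1 + s - a) \<le> y k s" if "k \<in> J" for k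
            using nonneg[OF that s] by (simp add: w_def)
          ultimately show "\<phi>' i s - L * (y i s - \<phi> i s + \<epsilon> * (1 + s - a)) \<le> f i s"
            using dissipative \<open>i \<in> J\<close> s by simp
        qed (use that \<open>0 \<le> L\<close> \<open>0 < \<epsilon>\<close> cont_y deriv_within increment w_def in auto)
        then show ?thesis
          by (simp add: w_def)
      qed
    qed (use assms in auto)
    then show ?thesis
      by (simp add: w_def)
  qed
  show ?thesis
  proof (rule field_le_epsilon)
    fix e :: real
    assume "0 < e"
    moreover have "0 < 1 + t - a"
      using \<open>a \<le> t\<close> by simp
    ultimately show "\<phi> j t \<le> y j t + e"
      using perturbed[of "e / (1 + t - a)"] by simp
  qed
qed

lemma rhs_lower_bound:
  assumes "i < N"
    and M: "\<And>j. j < N \<Longrightarrow> M i j s \<in> {0..1}"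
    and below: "\<And>j. j < N \<Longrightarrow> \<beta> \<le> x j s"
  shows "- ((real N - 1) / real N) * (x i s - \<beta>) \<le> rhs N M x i s"
proof -
  have pairwise: "\<beta> - x i s \<le> M i j s * (x j s - x i s)" if "j < N" for j
  proof -
    have "M i j s * (x i s - \<beta>) \<le> x i s - \<beta>"
      using M[OF that] below[OF \<open>i < N\<close>] by (intro mult_left_le_one_le) auto
    moreover have "M i j s * (\<beta> - x i s) \<le> M i j s * (x j s - x i s)"
      using M[OF that] below[OF that] by (intro mult_left_mono) auto
    ultimately show ?thesis
      by (simp add: algebra_simps)
  qed
  have "(\<Sum>j<N. M i j s * (x j s - x i s)) = (\<Sum>j\<in>{..<N} - {i}. M i j s * (x j s - x i s))"
    using \<open>i < N\<close> by (simp add: sum.remove)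
  also have "\<dots> \<ge> (\<Sum>j\<in>{..<N} - {i}. \<beta> - x i s)"
    using pairwise by (intro sum_mono) auto
  also have "(\<Sum>j\<in>{..<N} - {i}. \<beta> - x i s) = (real N - 1) * (\<beta> - x i s)"
    using \<open>i < N\<close> by (simp add: of_nat_diff)
  finally have "(real N - 1) * (\<beta> - x i s) \<le> (\<Sum>j<N. M i j s * (x j s - x i s))" .
  then have "(1 / real N) * ((real N - 1) * (\<beta> - x i s))
      \<le> (1 / real N) * (\<Sum>j<N. M i j s * (x j s - x i s))"
    by (rule mult_left_mono) simp
  moreover have "(1 / real N) * ((real N - 1) * (\<beta> - x i s)) = - ((real N - 1) / real N) * (x i s - \<beta>)"
    by (simp add: field_split_simps)
  ultimately show ?thesis
    unfolding rhs_def by linarith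
qed

lemma Psi_L_has_real_derivative:
  "(Psi_L N xbar \<alpha> has_real_derivative - ((real N - 1) / real N) * (Psi_L N xbar \<alpha> t - \<alpha>)) (at t within S)"
proof -
  have "((\<lambda>t. \<alpha> + exp (- c * t) * (xbar - \<alpha>)) has_real_derivative
      - c * (\<alpha> + exp (- c * t) * (xbar - \<alpha>) - \<alpha>)) (at t within S)" for c
    by (auto intro!: derivative_eq_intros)
  then show ?thesis
    unfolding Psi_L_def[abs_def] .
qed

lemma caratheodory_solution_has_integral:
  assumes "caratheodory_solution N M x" "i < N" "0 \<le> u" "u \<le> t"
  shows "(rhs N M x i has_integral (x i t - x i u)) {u..t}"
proof -
  have "\<And>t. 0 \<le> t \<Longrightarrow> (rhs N M x i has_integral (x i t - x i 0)) {0..t}"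
    using assms(1,2) unfolding caratheodory_solution_def by blast
  then show ?thesis
    using assms(3,4) by (rule has_integral_increment_subinterval)
qed

lemma caratheodory_solution_lower_bound:
  assumes "caratheodory_solution N M x"
    and M: "\<And>i j t. i < N \<Longrightarrow> j < N \<Longrightarrow> 0 \<le> t \<Longrightarrow> M i j t \<in> {0..1}"
    and "\<And>i. i < N \<Longrightarrow> \<alpha> \<le> x i 0"
    and "i < N" "0 \<le> t"
  shows "\<alpha> \<le> x i t"
proof (rule lower_barrier_comparison[where J = "{..<N}" and y = x and f = "rhs N M x" and j = i
      and t = t and a = 0 and \<phi> = "\<lambda>_ _. \<alpha>" and \<phi>' = "\<lambda>_ _. 0" and L = "(real N - 1) / real N"])
  fix k s \<delta>
  assume "k \<in> {..<N}" "0 \<le> s" "0 \<le> \<delta>" "\<And>j. j \<in> {..<N} \<Longrightarrow> \<alpha> - \<delta> \<le> x j s"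
  then show "0 - (real N - 1) / real N * (x k s - \<alpha> + \<delta>) \<le> rhs N M x k s"
    using rhs_lower_bound[of k N M s "\<alpha> - \<delta>" x] M by (simp add: algebra_simps)
qed (use assms caratheodory_solution_has_integral in auto)

lemma caratheodory_solution_ge_Psi_L:
  assumes sol: "caratheodory_solution N M x"
    and M: "\<And>i j t. i < N \<Longrightarrow> j < N \<Longrightarrow> 0 \<le> t \<Longrightarrow> M i j t \<in> {0..1}"
    and init: "\<And>i. i < N \<Longrightarrow> \<alpha> \<le> x i 0"
    and "I < N" "0 \<le> \<tau>" "Psi_L N xbar \<alpha> \<tau> \<le> x I \<tau>" "\<tau> \<le> t"
  shows "Psi_L N xbar \<alpha> t \<le> x I t"
proof -
  define c where "c = (real N - 1) / real N"
  have "0 \<le> c"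
    unfolding c_def using \<open>I < N\<close> by simp
  have rhs_bound: "- c * (x I s - \<alpha>) \<le> rhs N M x I s" if "\<tau> \<le> s" for s
    unfolding c_def using \<open>I < N\<close> \<open>0 \<le> \<tau>\<close> that
    by (intro rhs_lower_bound M caratheodory_solution_lower_bound[OF sol M init]) auto
  show ?thesis
  proof (rule lower_barrier_comparison[where J = "{I}" and y = x and f = "rhs N M x" and j = I
        and t = t and a = \<tau> and \<phi> = "\<lambda>_. Psi_L N xbar \<alpha>" and \<phi>' = "\<lambda>_ s. - c * (Psi_L N xbar \<alpha> s - \<alpha>)"
        and L = c])
    fix k :: nat and s \<delta> :: real
    assume "k \<in> {I}" "\<tau> \<le> s" "0 \<le> \<delta>"
    then have "- c * (Psi_L N xbar \<alpha> s - \<alpha>) - c * (x k s - Psi_L N xbar \<alpha> s + \<delta>)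
        = - c * (x I s - \<alpha>) - c * \<delta>" "0 \<le> c * \<delta>"
      using \<open>0 \<le> c\<close> by (auto simp: algebra_simps)
    then show "- c * (Psi_L N xbar \<alpha> s - \<alpha>) - c * (x k s - Psi_L N xbar \<alpha> s + \<delta>) \<le> rhs N M x k s"
      using rhs_bound[OF \<open>\<tau> \<le> s\<close>] \<open>k \<in> {I}\<close> by simp
  qed (use assms \<open>0 \<le> c\<close> caratheodory_solution_has_integral Psi_L_has_real_derivative in \<open>auto simp: c_def\<close>)
qed

theorem proposition4:
  fixes N :: nat and M :: "nat \<Rightarrow> nat \<Rightarrow> real \<Rightarrow> real" and x :: "nat \<Rightarrow> real \<Rightarrow> real"
    and xbar \<alpha> T \<tau> :: real and I :: nat
  assumes "N \<ge> 2"
    and "\<And>i j. i < N \<Longrightarrow> j < N \<Longrightarrow> M i j \<in> borel_measurable (lebesgue_on {0..})"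
    and "\<And>i j t. i < N \<Longrightarrow> j < N \<Longrightarrow> t \<ge> 0 \<Longrightarrow> M i j t \<in> {0..1}"
    and "caratheodory_solution N M x"
    and "\<And>i. i < N \<Longrightarrow> x i 0 \<ge> \<alpha>"
    and "xbar \<ge> \<alpha>"
    and "T > 0"
    and "I < N" and "\<tau> \<in> {0..T}"
    and "x I \<tau> \<ge> Psi_L N xbar \<alpha> \<tau>"
  shows "\<forall>t\<ge>\<tau>. x I t \<ge> Psi_L N xbar \<alpha> t"
  using caratheodory_solution_ge_Psi_L[OF assms(4,3,5,8)] assms(9,10) by auto

end
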